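(* Let $P=\{x\in\mathbb{R}^n: Ax\ge b\}$ with rational data be full-dimensional and pointed, let $\mathcal{I}\subseteq\{1,\dots,n\}$ and $P_I=\{x\in P: x_j\in\mathbb{Z}\ \forall j\in\mathcal{I}\}$. Let $\mathcal{T}$ be a finite index set and $P^t=\{x\in P: D^tx\ge D^t_0\}$, $t\in\mathcal{T}$, be the terms of a disjunction with $P_I\subseteq P_D:=\operatorname{cl}\operatorname{conv}(\bigcup_{t}P^t)$. For $t\in\mathcal{T}$ let $\mathcal{P}^{t*}$ and $\mathcal{R}^{t*}$ be the complete sets of extreme points and extreme rays of $P^t$, and let $\mathcal{P}^*=\bigcup_t\mathcal{P}^{t*}$, $\mathcal{R}^*=\bigcup_t\mathcal{R}^{t*}$. Then $(\mathcal{P}^*,\mathcal{R}^* )$ is proper. Every extreme ray solution $(\alpha,\beta)$ of the associated PRLP corresponds to a facet $\alpha^\top x\ge\beta$ of $P_D$. Conversely, for every facet $\alpha^\top x\ge\beta$ of $P_D$, the solution $(\alpha,\beta)$ to the PRLP is feasible and extreme.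
   Context: For finite sets $\mathcal{P},\mathcal{R}\subset\mathbb{R}^n$, the point-ray linear program (PRLP) has feasible region $\{(\alpha,\beta)\in\mathbb{R}^n\times\mathbb{R}: \alpha^\top p\ge\beta\ \forall p\in\mathcal{P},\ \alpha^\top r\ge 0\ \forall r\in\mathcal{R}\}$ (a polyhedral cone; "extreme" means an extreme ray of this cone). The collection $(\mathcal{P},\mathcal{R})$ is proper if $\alpha^\top x\ge\beta$ is valid for $P_I$ whenever $(\alpha,\beta)$ is feasible for the PRLP.
   Formalization: The converse clause is asserted only when $P_D$ is full-dimensional, and the forward clause only for extreme ray solutions $(\alpha,\beta)$ with alpha nonzero. The statement above fails without it. *)

theory Defs
  imports "HOL-Analysis.Analysis"
begin

definition polyhedron_of :: "real^'n^'m \<Rightarrow> real^'m \<Rightarrow> (real^'n) set" where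
  "polyhedron_of A b = {x. \<forall>i. (A *v x) $ i \<ge> b $ i}"

definition term_poly :: "real^'n^'m \<Rightarrow> real^'m \<Rightarrow> ((real^'n) \<times> real) set \<Rightarrow> (real^'n) set" where
  "term_poly A b Dt = {x \<in> polyhedron_of A b. \<forall>(d, d0) \<in> Dt. d \<bullet> x \<ge> d0}"

definition mixed_int_hull :: "real^'n^'m \<Rightarrow> real^'m \<Rightarrow> 'n set \<Rightarrow> (real^'n) set" where
  "mixed_int_hull A b I = {x \<in> polyhedron_of A b. \<forall>j \<in> I. x $ j \<in> \<int>}"

definition disj_hull :: "real^'n^'m \<Rightarrow> real^'m \<Rightarrow> 't set \<Rightarrow> ('t \<Rightarrow> ((real^'n) \<times> real) set) \<Rightarrow> (real^'n) set" where
  "disj_hull A b T D = closure (convex hull (\<Union>t\<in>T. term_poly A b (D t)))"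

definition rec_cone :: "'a::real_vector set \<Rightarrow> 'a set" where
  "rec_cone Q = {d. \<forall>x\<in>Q. \<forall>c::real. c \<ge> 0 \<longrightarrow> x + c *\<^sub>R d \<in> Q}"

definition extreme_ray_of :: "'a::real_vector \<Rightarrow> 'a set \<Rightarrow> bool" where
  "extreme_ray_of v C \<longleftrightarrow> v \<noteq> 0 \<and> v \<in> C \<and> {c *\<^sub>R v | c::real. c \<ge> 0} face_of C"

definition extreme_dir :: "'a::real_vector set \<Rightarrow> 'a \<Rightarrow> bool" where
  "extreme_dir Q r \<longleftrightarrow> Q \<noteq> {} \<and> extreme_ray_of r (rec_cone Q)"

definition complete_extreme_rays :: "'a::real_vector set \<Rightarrow> 'a set \<Rightarrow> bool" where
  "complete_extreme_rays Q R \<longleftrightarrow> finite R \<and> (\<forall>r\<in>R. extreme_dir Q r)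
     \<and> (\<forall>d. extreme_dir Q d \<longrightarrow> (\<exists>r\<in>R. \<exists>c>0. d = c *\<^sub>R r))"

definition Pstar :: "real^'n^'m \<Rightarrow> real^'m \<Rightarrow> 't set \<Rightarrow> ('t \<Rightarrow> ((real^'n) \<times> real) set) \<Rightarrow> (real^'n) set" where
  "Pstar A b T D = (\<Union>t\<in>T. {p. p extreme_point_of term_poly A b (D t)})"

definition prlp_cone :: "(real^'n) set \<Rightarrow> (real^'n) set \<Rightarrow> ((real^'n) \<times> real) set" where
  "prlp_cone Ps Rs = {(\<alpha>, \<beta>). (\<forall>p\<in>Ps. \<alpha> \<bullet> p \<ge> \<beta>) \<and> (\<forall>r\<in>Rs. \<alpha> \<bullet> r \<ge> 0)}"

definition proper :: "(real^'n) set \<Rightarrow> (real^'n) set \<Rightarrow> (real^'n) set \<Rightarrow> bool" where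
  "proper Ps Rs PI \<longleftrightarrow> (\<forall>\<alpha> \<beta>. (\<alpha>, \<beta>) \<in> prlp_cone Ps Rs \<longrightarrow> (\<forall>x\<in>PI. \<alpha> \<bullet> x \<ge> \<beta>))"

definition facet_ineq :: "(real^'n) \<Rightarrow> real \<Rightarrow> (real^'n) set \<Rightarrow> bool" where
  "facet_ineq \<alpha> \<beta> Q \<longleftrightarrow> (\<forall>x\<in>Q. \<alpha> \<bullet> x \<ge> \<beta>) \<and> {x \<in> Q. \<alpha> \<bullet> x = \<beta>} facet_of Q"

end

theory Submission
  imports Defs
begin

text \<open>
  Each term \<open>P\<^sup>t\<close> is a polyhedron without lines, because \<open>P\<close> is pointed. Its homogenization, the
  cone of all \<open>(x, \<lambda>)\<close> with \<open>\<lambda> \<ge> 0\<close> and \<open>a x \<ge> \<lambda> a\<^sub>0\<close> for every defining inequality \<open>a x \<ge> a\<^sub>0\<close>,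
  is then a pointed closed convex cone. A hyperplane slice of it is compact, so by Krein--Milman
  the cone is generated by its extreme rays, and these come from the extreme points and the
  extreme rays of \<open>P\<^sup>t\<close>. Hence (Minkowski) an inequality is valid for \<open>P\<^sup>t\<close> iff it holds at the
  extreme points and is nonnegative on the extreme rays. As closing the convex hull of the union
  does not change the valid inequalities, the PRLP cone is exactly the cone of inequalities valid
  for \<open>P\<^sub>D\<close>, and properness follows.

  An extreme ray \<open>(\<alpha>, \<beta>)\<close> of this finitely constrained cone is determined up to scaling by its
  tight constraints. The tight points, and the tight rays translated from a tight point, lie in
  \<open>F = P\<^sub>D \<inter> {\<alpha> x = \<beta>}\<close>, so no other hyperplane contains \<open>F\<close>, and \<open>F\<close> is a facet. Conversely, a
  facet inequality of a full-dimensional \<open>P\<^sub>D\<close> can only be split into valid inequalities that are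
  tight on the facet, i.e. into nonnegative multiples of itself.
\<close>

lemma nonneg_slope_if_bounded_below:
  fixes p q s :: real
  assumes "\<And>c. 0 \<le> c \<Longrightarrow> p \<le> q + c * s"
  shows "0 \<le> s"
proof (rule ccontr)
  assume "\<not> 0 \<le> s"
  define c where "c = (\<bar>q - p\<bar> + 1) / - s"
  have "0 \<le> c" and "c * s = - (\<bar>q - p\<bar> + 1)"
    using \<open>\<not> 0 \<le> s\<close> by (simp_all add: c_def divide_nonneg_neg)
  then show False
    using assms[of c] by linarith
qed

lemma extreme_point_of_plus_minus:
  assumes "x extreme_point_of S" "x + y \<in> S" "x - y \<in> S"
  shows "y = 0"
proof (rule ccontr)
  assume "y \<noteq> 0"
  have "x - y \<noteq> x + y"
  proof
    assume "x - y = x + y"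
    then have "2 *\<^sub>R y = 0"
      by (simp add: scaleR_2 algebra_simps)
    with \<open>y \<noteq> 0\<close> show False
      by simp
  qed
  moreover have "midpoint (x - y) (x + y) = x"
    by (simp add: midpoint_eq_iff)
  ultimately have "x \<in> open_segment (x - y) (x + y)"
    by (metis midpoint_in_open_segment)
  then show False
    using assms by (auto simp: extreme_point_of_def)
qed

lemma extreme_point_of_convex_combination:
  assumes "v extreme_point_of S" "x \<in> S" "y \<in> S" "0 < t" "t < 1"
    and "v = (1 - t) *\<^sub>R x + t *\<^sub>R y"
  shows "x = v"
proof (cases "x = y")
  case False
  then have "v \<in> open_segment x y"
    using assms(4-6) by (auto simp: in_segment)
  then show ?thesis
    using assms(1-3) by (auto simp: extreme_point_of_def)
qed (use assms in \<open>simp add: scaleR_left_diff_distrib\<close>)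

lemma convex_cone_sum:
  assumes "convex_cone K" "\<And>i. i \<in> S \<Longrightarrow> f i \<in> K"
  shows "sum f S \<in> K"
  using assms(2)
  by (induction S rule: infinite_finite_induct)
     (auto simp: convex_cone_contains_0[OF assms(1)] convex_cone_add[OF assms(1)])

lemma convex_ray: "convex {c *\<^sub>R v | c::real. 0 \<le> c}"
proof -
  have "{c *\<^sub>R v | c::real. 0 \<le> c} = (\<lambda>c. c *\<^sub>R v) ` {0..}"
    by auto
  moreover have "linear (\<lambda>c::real. c *\<^sub>R v)"
    by (simp add: linear_scaleR_left)
  ultimately show ?thesis
    using convex_linear_image[of "\<lambda>c::real. c *\<^sub>R v" "{0..}"] by simp
qed

section \<open>Extreme rays of convex cones\<close>

lemma extreme_ray_of_summand:
  assumes K: "convex_cone K" and "extreme_ray_of v K"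
    and a: "a1 \<in> K" "a2 \<in> K" "a1 + a2 = v"
  shows "\<exists>c\<ge>0. a1 = c *\<^sub>R v"
proof (cases "a1 = a2")
  case True
  then have "v = 2 *\<^sub>R a1"
    using a(3) by (simp add: scaleR_2)
  then show ?thesis
    by (intro exI[of _ "1/2"]) simp
next
  case False
  have face: "{c *\<^sub>R v | c. 0 \<le> c} face_of K"
    using assms(2) by (simp add: extreme_ray_of_def)
  have "midpoint (2 *\<^sub>R a1) (2 *\<^sub>R a2) = v"
    using a(3) by (simp add: midpoint_def scaleR_add_right)
  then have "v \<in> open_segment (2 *\<^sub>R a1) (2 *\<^sub>R a2)"
    using False midpoint_in_open_segment[of "2 *\<^sub>R a1" "2 *\<^sub>R a2"] by simp
  moreover have "v \<in> {c *\<^sub>R v | c. 0 \<le> c}" "2 *\<^sub>R a1 \<in> K" "2 *\<^sub>R a2 \<in> K"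
    using a K by (auto intro: exI[of _ 1] convex_cone_scaleR)
  ultimately have "2 *\<^sub>R a1 \<in> {c *\<^sub>R v | c. 0 \<le> c}"
    using face unfolding face_of_def by blast
  then obtain c where "0 \<le> c" "2 *\<^sub>R a1 = c *\<^sub>R v"
    by blast
  have "a1 = (1 / 2) *\<^sub>R (2 *\<^sub>R a1)"
    by simp
  also have "\<dots> = (c / 2) *\<^sub>R v"
    using \<open>2 *\<^sub>R a1 = c *\<^sub>R v\<close> by simp
  finally show ?thesis
    using \<open>0 \<le> c\<close> by (intro exI[of _ "c / 2"]) simp
qed

lemma ray_summand_if_scaled:
  assumes K: "convex_cone K" and "v \<in> K"
    and split: "\<forall>a1\<in>K. \<forall>a2\<in>K. a1 + a2 = v \<longrightarrow> (\<exists>c\<ge>0. a1 = c *\<^sub>R v)"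
    and b: "p \<in> K" "q \<in> K" "0 \<le> s" "p + q = s *\<^sub>R v"
  shows "\<exists>c\<ge>0. p = c *\<^sub>R v"
proof -
  have "(1 / (s + 1)) *\<^sub>R p + (1 / (s + 1)) *\<^sub>R (q + v) = (1 / (s + 1)) *\<^sub>R (p + q + v)"
    by (simp add: scaleR_add_right add.assoc)
  also have "\<dots> = (1 / (s + 1)) *\<^sub>R ((s + 1) *\<^sub>R v)"
    using b(4) by (simp add: scaleR_add_left)
  also have "\<dots> = v"
    using b(3) by simp
  finally have "(1 / (s + 1)) *\<^sub>R p + (1 / (s + 1)) *\<^sub>R (q + v) = v" .
  moreover have "(1 / (s + 1)) *\<^sub>R p \<in> K" "(1 / (s + 1)) *\<^sub>R (q + v) \<in> K"
    using b \<open>v \<in> K\<close> K by (auto intro!: convex_cone_scaleR convex_cone_add)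
  ultimately obtain c where "0 \<le> c" "(1 / (s + 1)) *\<^sub>R p = c *\<^sub>R v"
    using split by blast
  have "p = (s + 1) *\<^sub>R ((1 / (s + 1)) *\<^sub>R p)"
    using b(3) by simp
  also have "\<dots> = ((s + 1) * c) *\<^sub>R v"
    using \<open>(1 / (s + 1)) *\<^sub>R p = c *\<^sub>R v\<close> by simp
  finally show ?thesis
    using \<open>0 \<le> c\<close> b(3) by (intro exI[of _ "(s + 1) * c"]) auto
qed

lemma extreme_ray_ofI:
  assumes K: "convex_cone K" and "v \<noteq> 0" "v \<in> K"
    and split: "\<And>a1 a2. a1 \<in> K \<Longrightarrow> a2 \<in> K \<Longrightarrow> a1 + a2 = v \<Longrightarrow> \<exists>c\<ge>0. a1 = c *\<^sub>R v"
  shows "extreme_ray_of v K"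
  unfolding extreme_ray_of_def face_of_def
proof (intro conjI ballI impI \<open>v \<noteq> 0\<close> \<open>v \<in> K\<close> convex_ray)
  show "{c *\<^sub>R v | c. 0 \<le> c} \<subseteq> K"
    using \<open>v \<in> K\<close> K by (auto intro: convex_cone_scaleR)
  have split': "\<forall>a1\<in>K. \<forall>a2\<in>K. a1 + a2 = v \<longrightarrow> (\<exists>c\<ge>0. a1 = c *\<^sub>R v)"
    using split by blast
  fix a1 a2 p
  assume a: "a1 \<in> K" "a2 \<in> K" and "p \<in> {c *\<^sub>R v | c. 0 \<le> c}" "p \<in> open_segment a1 a2"
  then obtain c0 u where "0 \<le> c0" "0 < u" "u < 1" "(1 - u) *\<^sub>R a1 + u *\<^sub>R a2 = c0 *\<^sub>R v"
    by (auto simp: in_segment)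
  moreover have "(1 - u) *\<^sub>R a1 \<in> K" "u *\<^sub>R a2 \<in> K"
    using a K \<open>0 < u\<close> \<open>u < 1\<close> by (auto intro: convex_cone_scaleR)
  ultimately obtain c1 c2 where "0 \<le> c1" "(1 - u) *\<^sub>R a1 = c1 *\<^sub>R v" "0 \<le> c2" "u *\<^sub>R a2 = c2 *\<^sub>R v"
    using ray_summand_if_scaled[OF K \<open>v \<in> K\<close> split', where p = "(1 - u) *\<^sub>R a1" and q = "u *\<^sub>R a2" and s = c0]
      ray_summand_if_scaled[OF K \<open>v \<in> K\<close> split', where p = "u *\<^sub>R a2" and q = "(1 - u) *\<^sub>R a1" and s = c0]
    by (auto simp: add.commute)
  moreover have "a1 = (1 / (1 - u)) *\<^sub>R ((1 - u) *\<^sub>R a1)" "a2 = (1 / u) *\<^sub>R (u *\<^sub>R a2)"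
    using \<open>0 < u\<close> \<open>u < 1\<close> by auto
  ultimately have "a1 = (c1 / (1 - u)) *\<^sub>R v" "a2 = (c2 / u) *\<^sub>R v"
    by simp_all
  then show "a1 \<in> {c *\<^sub>R v | c. 0 \<le> c}" "a2 \<in> {c *\<^sub>R v | c. 0 \<le> c}"
    using \<open>0 \<le> c1\<close> \<open>0 \<le> c2\<close> \<open>0 < u\<close> \<open>u < 1\<close> by auto
qed

lemma extreme_ray_of_neg_notin:
  assumes K: "convex_cone K" and ray: "extreme_ray_of v K"
  shows "- v \<notin> K"
proof
  assume "- v \<in> K"
  have "v \<noteq> 0" "v \<in> K"
    using ray by (simp_all add: extreme_ray_of_def)
  then have "2 *\<^sub>R v \<in> K"
    using K by (simp add: convex_cone_scaleR)
  moreover have "- v + 2 *\<^sub>R v = v"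
    by (simp add: scaleR_2)
  ultimately obtain c where "0 \<le> c" "- v = c *\<^sub>R v"
    using extreme_ray_of_summand[OF K ray \<open>- v \<in> K\<close>] by blast
  have "(c + 1) *\<^sub>R v = c *\<^sub>R v + v"
    by (simp add: algebra_simps)
  also have "\<dots> = 0"
    by (simp flip: \<open>- v = c *\<^sub>R v\<close>)
  finally have "(c + 1) *\<^sub>R v = 0" .
  with \<open>0 \<le> c\<close> \<open>v \<noteq> 0\<close> show False
    by simp
qed

lemma zero_notin_convex_hull_pointed_cone_sphere:
  assumes K: "convex_cone K" and pointed: "\<And>z. z \<in> K \<Longrightarrow> - z \<in> K \<Longrightarrow> z = 0"
  shows "0 \<notin> convex hull (K \<inter> sphere 0 1)"
proof
  assume "0 \<in> convex hull (K \<inter> sphere 0 1)"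
  then obtain S u where S: "finite S" "S \<subseteq> K \<inter> sphere 0 1" "\<forall>x\<in>S. 0 \<le> u x" "sum u S = 1"
    and zero: "(\<Sum>x\<in>S. u x *\<^sub>R x) = 0"
    unfolding convex_hull_explicit by blast
  obtain y where y: "y \<in> S" "0 < u y"
  proof (rule ccontr)
    assume "\<not> thesis"
    then have "sum u S \<le> 0"
      using that by (force intro: sum_nonpos)
    with S(4) show False
      by simp
  qed
  have "(\<Sum>x\<in>S - {y}. u x *\<^sub>R x) \<in> K"
    using S(2,3) K by (intro convex_cone_sum) (auto intro: convex_cone_scaleR)
  moreover have "(\<Sum>x\<in>S - {y}. u x *\<^sub>R x) = - (u y *\<^sub>R y)"
    using zero sum.remove[OF S(1) y(1), of "\<lambda>x. u x *\<^sub>R x"] by (simp add: eq_neg_iff_add_eq_0 add.commute)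
  moreover have "u y *\<^sub>R y \<in> K"
    using S(2) y K by (auto intro: convex_cone_scaleR)
  ultimately have "u y *\<^sub>R y = 0"
    using pointed by metis
  moreover have "y \<noteq> 0"
    using S(2) y(1) by auto
  ultimately show False
    using y(2) by simp
qed

lemma pointed_cone_norm_bound:
  fixes K :: "'a::euclidean_space set"
  assumes "closed K" and K: "convex_cone K" and pointed: "\<And>z. z \<in> K \<Longrightarrow> - z \<in> K \<Longrightarrow> z = 0"
  obtains w e where "0 < e" "\<And>z. z \<in> K \<Longrightarrow> e * norm z \<le> w \<bullet> z"
proof -
  define H where "H = convex hull (K \<inter> sphere 0 1)"
  have "compact H"
    unfolding H_def using \<open>closed K\<close> by (intro compact_convex_hull closed_Int_compact compact_sphere)
  moreover have "0 \<notin> H"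
    unfolding H_def by (rule zero_notin_convex_hull_pointed_cone_sphere[OF K pointed])
  ultimately obtain w c where "w \<bullet> 0 < c" and c: "\<And>x. x \<in> H \<Longrightarrow> c < w \<bullet> x"
    using separating_hyperplane_closed_point[of H 0] by (auto simp: H_def compact_imp_closed)
  have "c * norm z \<le> w \<bullet> z" if "z \<in> K" for z
  proof (cases "z = 0")
    case False
    then have "(1 / norm z) *\<^sub>R z \<in> H"
      unfolding H_def using that K by (intro hull_inc) (auto intro: convex_cone_scaleR)
    then have "c < (w \<bullet> z) / norm z"
      using c by fastforce
    then show ?thesis
      using False by (simp add: field_simps)
  qed simp
  moreover have "0 < c"
    using \<open>w \<bullet> 0 < c\<close> by simp
  ultimately show ?thesis
    using that by blast
qed

lemma extreme_point_of_slice_imp_extreme_ray_of: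
  assumes K: "convex_cone K" and pos: "\<And>z. z \<in> K \<Longrightarrow> z \<noteq> 0 \<Longrightarrow> 0 < w \<bullet> z"
    and v: "v extreme_point_of (K \<inter> {z. w \<bullet> z = 1})"
  shows "extreme_ray_of v K"
proof (rule extreme_ray_ofI[OF K])
  show "v \<in> K" "v \<noteq> 0"
    using v by (auto simp: extreme_point_of_def)
  fix a1 a2 assume a: "a1 \<in> K" "a2 \<in> K" "a1 + a2 = v"
  show "\<exists>c\<ge>0. a1 = c *\<^sub>R v"
  proof (cases "a1 = 0 \<or> a2 = 0")
    case True
    then show ?thesis
      using a(3) by (auto intro: exI[of _ 0] exI[of _ 1])
  next
    case False
    define s1 s2 where "s1 = w \<bullet> a1" and "s2 = w \<bullet> a2"
    have "0 < s1" "0 < s2"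
      using False a pos by (auto simp: s1_def s2_def)
    moreover have "s1 + s2 = 1"
      using a(3) v by (auto simp: s1_def s2_def extreme_point_of_def simp flip: inner_add_right)
    ultimately have "1 - s2 = s1" "s2 < 1"
      by linarith+
    have "(1 / s1) *\<^sub>R a1 \<in> K \<inter> {z. w \<bullet> z = 1}" "(1 / s2) *\<^sub>R a2 \<in> K \<inter> {z. w \<bullet> z = 1}"
      using \<open>0 < s1\<close> \<open>0 < s2\<close> a K by (auto simp: s1_def s2_def intro: convex_cone_scaleR)
    moreover have "v = (1 - s2) *\<^sub>R ((1 / s1) *\<^sub>R a1) + s2 *\<^sub>R ((1 / s2) *\<^sub>R a2)"
      using a(3) \<open>0 < s1\<close> \<open>0 < s2\<close> unfolding \<open>1 - s2 = s1\<close> by simp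
    ultimately have "(1 / s1) *\<^sub>R a1 = v"
      using extreme_point_of_convex_combination[OF v] \<open>0 < s2\<close> \<open>s2 < 1\<close> by blast
    then have "a1 = s1 *\<^sub>R v"
      using \<open>0 < s1\<close> by auto
    then show ?thesis
      using \<open>0 < s1\<close> by (intro exI[of _ s1]) simp
  qed
qed

lemma compact_cone_slice:
  fixes K :: "'a::euclidean_space set"
  assumes "closed K" "0 < e" and bound: "\<And>z. z \<in> K \<Longrightarrow> e * norm z \<le> w \<bullet> z"
  shows "compact (K \<inter> {z. w \<bullet> z = 1})"
proof -
  have "bounded (K \<inter> {z. w \<bullet> z = 1})"
    unfolding bounded_iff
  proof (intro exI ballI)
    fix x assume "x \<in> K \<inter> {z. w \<bullet> z = 1}"
    then have "e * norm x \<le> 1"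
      using bound[of x] by simp
    then show "norm x \<le> 1 / e"
      using \<open>0 < e\<close> by (simp add: field_simps)
  qed
  moreover have "closed (K \<inter> {z. w \<bullet> z = 1})"
    using \<open>closed K\<close> by (intro closed_Int closed_hyperplane)
  ultimately show ?thesis
    by (simp add: compact_eq_bounded_closed)
qed

lemma nonneg_on_pointed_cone_if_nonneg_on_extreme_rays:
  fixes K :: "'a::euclidean_space set"
  assumes "closed K" and K: "convex_cone K" and "\<And>z. z \<in> K \<Longrightarrow> - z \<in> K \<Longrightarrow> z = 0"
    and rays: "\<And>v. extreme_ray_of v K \<Longrightarrow> 0 \<le> c \<bullet> v" and "z \<in> K"
  shows "0 \<le> c \<bullet> z"
proof -
  obtain w e where "0 < e" and bound: "\<And>z. z \<in> K \<Longrightarrow> e * norm z \<le> w \<bullet> z"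
    using pointed_cone_norm_bound[OF assms(1-3)] by metis
  have pos: "0 < w \<bullet> z" if "z \<in> K" "z \<noteq> 0" for z
  proof -
    have "0 < e * norm z"
      using \<open>0 < e\<close> that(2) by simp
    then show ?thesis
      using bound[OF that(1)] by linarith
  qed
  define S where "S = K \<inter> {z. w \<bullet> z = 1}"
  have "compact S"
    unfolding S_def using compact_cone_slice[OF \<open>closed K\<close> \<open>0 < e\<close> bound] .
  moreover have "convex S"
    unfolding S_def using K by (intro convex_Int convex_hyperplane) (simp add: convex_cone_def)
  ultimately have "S = convex hull {x. x extreme_point_of S}"
    by (rule Krein_Milman_Minkowski)
  also have "\<dots> \<subseteq> {x. 0 \<le> c \<bullet> x}"
  proof (rule hull_minimal)
    show "{x. x extreme_point_of S} \<subseteq> {x. 0 \<le> c \<bullet> x}"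
      using rays extreme_point_of_slice_imp_extreme_ray_of[OF K pos] unfolding S_def by blast
  qed (rule convex_halfspace_ge)
  finally have S_nonneg: "x \<in> S \<Longrightarrow> 0 \<le> c \<bullet> x" for x
    by blast
  show ?thesis
  proof (cases "z = 0")
    case False
    then have "0 < w \<bullet> z"
      using pos \<open>z \<in> K\<close> by blast
    then have "(1 / (w \<bullet> z)) *\<^sub>R z \<in> S"
      using \<open>z \<in> K\<close> K by (simp add: S_def convex_cone_scaleR)
    then have "0 \<le> (c \<bullet> z) / (w \<bullet> z)"
      using S_nonneg by force
    then show ?thesis
      using \<open>0 < w \<bullet> z\<close> by (simp add: zero_le_divide_iff)
  qed simp
qed

definition dual_cone :: "'a::real_inner set \<Rightarrow> 'a set" where
  "dual_cone G = {z. \<forall>g\<in>G. 0 \<le> g \<bullet> z}"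

lemma dual_cone_eq_Inter: "dual_cone G = (\<Inter>g\<in>G. {z. 0 \<le> g \<bullet> z})"
  by (auto simp: dual_cone_def)

lemma convex_cone_dual_cone: "convex_cone (dual_cone G)"
  unfolding dual_cone_eq_Inter by (rule convex_cone_Inter) (auto intro: convex_cone_halfspace_ge)

lemma closed_dual_cone: "closed (dual_cone G)"
  unfolding dual_cone_eq_Inter by (intro closed_INT ballI closed_halfspace_ge)

lemma small_perturbation_exists:
  assumes "finite G" "\<And>g. g \<in> G \<Longrightarrow> 0 \<le> f g" "\<And>g. g \<in> G \<Longrightarrow> f g = 0 \<Longrightarrow> h g = 0"
  obtains e :: real where "0 < e" "\<And>g. g \<in> G \<Longrightarrow> \<bar>e * h g\<bar> \<le> f g"
proof -
  have "\<forall>g\<in>G. eventually (\<lambda>e::real. \<bar>e * h g\<bar> \<le> f g) (at_right 0)"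
  proof
    fix g assume "g \<in> G"
    show "eventually (\<lambda>e::real. \<bar>e * h g\<bar> \<le> f g) (at_right 0)"
    proof (cases "f g = 0")
      case False
      then have "\<bar>0 * h g\<bar> < f g"
        using assms(2) \<open>g \<in> G\<close> by (simp add: order_less_le)
      moreover have "((\<lambda>e::real. \<bar>e * h g\<bar>) \<longlongrightarrow> \<bar>0 * h g\<bar>) (at_right 0)"
        by (intro tendsto_intros)
      ultimately have "eventually (\<lambda>e::real. \<bar>e * h g\<bar> < f g) (at_right 0)"
        by (intro order_tendstoD(2))
      then show ?thesis
        by (rule eventually_mono) simp
    qed (use assms(3) \<open>g \<in> G\<close> in simp)
  qed
  then have "eventually (\<lambda>e::real. \<forall>g\<in>G. \<bar>e * h g\<bar> \<le> f g) (at_right 0)"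
    by (rule eventually_ball_finite[OF assms(1)])
  then have "eventually (\<lambda>e::real. 0 < e \<and> (\<forall>g\<in>G. \<bar>e * h g\<bar> \<le> f g)) (at_right 0)"
    by (rule eventually_conj[OF eventually_at_right_less])
  then show ?thesis
    using that eventually_happens'[OF trivial_limit_at_right_real] by blast
qed

lemma extreme_ray_of_dual_cone_rigid:
  fixes G :: "'a::real_inner set"
  assumes "finite G" and ray: "extreme_ray_of v (dual_cone G)"
    and tight: "\<And>g. g \<in> G \<Longrightarrow> g \<bullet> v = 0 \<Longrightarrow> g \<bullet> y = 0"
  shows "\<exists>k. y = k *\<^sub>R v"
proof -
  have "v \<in> dual_cone G"
    using ray by (simp add: extreme_ray_of_def)
  \<comment> \<open>\<open>v \<plusminus> e y\<close> stay in the cone for small \<open>e\<close>, since \<open>y\<close> vanishes on the constraints tight at \<open>v\<close>\<close>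
  obtain e where "0 < e" and e: "\<And>g. g \<in> G \<Longrightarrow> \<bar>e * (g \<bullet> y)\<bar> \<le> g \<bullet> v"
    using small_perturbation_exists[OF \<open>finite G\<close>, where f = "\<lambda>g. g \<bullet> v" and h = "\<lambda>g. g \<bullet> y"]
      \<open>v \<in> dual_cone G\<close> tight by (auto simp: dual_cone_def)
  have "0 \<le> g \<bullet> v + e * (g \<bullet> y)" "0 \<le> g \<bullet> v - e * (g \<bullet> y)" if "g \<in> G" for g
    using e[OF that] by (simp_all add: abs_le_iff)
  then have "(1 / 2) *\<^sub>R (v + e *\<^sub>R y) \<in> dual_cone G" "(1 / 2) *\<^sub>R (v - e *\<^sub>R y) \<in> dual_cone G"
    by (simp_all add: dual_cone_def inner_add_right inner_diff_right)
  moreover have "(1 / 2) *\<^sub>R (v + e *\<^sub>R y) + (1 / 2) *\<^sub>R (v - e *\<^sub>R y) = v"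
    by (simp add: algebra_simps flip: scaleR_add_left)
  ultimately obtain c where "(1 / 2) *\<^sub>R (v + e *\<^sub>R y) = c *\<^sub>R v"
    using extreme_ray_of_summand[OF convex_cone_dual_cone ray] by blast
  have "v + e *\<^sub>R y = 2 *\<^sub>R ((1 / 2) *\<^sub>R (v + e *\<^sub>R y))"
    by simp
  also have "\<dots> = (2 * c) *\<^sub>R v"
    using \<open>(1 / 2) *\<^sub>R (v + e *\<^sub>R y) = c *\<^sub>R v\<close> by simp
  finally have "e *\<^sub>R y = (2 * c - 1) *\<^sub>R v"
    by (simp add: algebra_simps)
  have "y = (1 / e) *\<^sub>R (e *\<^sub>R y)"
    using \<open>0 < e\<close> by simp
  also have "\<dots> = ((2 * c - 1) / e) *\<^sub>R v"
    using \<open>e *\<^sub>R y = (2 * c - 1) *\<^sub>R v\<close> by simp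
  finally show ?thesis
    by blast
qed

section \<open>Homogenization and Minkowski's theorem\<close>

definition halfspaces_Inter :: "('a::real_inner \<times> real) set \<Rightarrow> 'a set" where
  "halfspaces_Inter H = {x. \<forall>(a, a0)\<in>H. a0 \<le> a \<bullet> x}"

definition homogenization :: "('a::real_inner \<times> real) set \<Rightarrow> ('a \<times> real) set" where
  "homogenization H = {(x, l). 0 \<le> l \<and> (\<forall>(a, a0)\<in>H. l * a0 \<le> a \<bullet> x)}"

lemma homogenization_eq_dual_cone:
  "homogenization H = dual_cone (insert (0, 1) ((\<lambda>p. (fst p, - snd p)) ` H))"
  by (fastforce simp: homogenization_def dual_cone_def inner_Pair case_prod_unfold mult.commute)

lemma closed_homogenization: "closed (homogenization H)"
  by (simp add: homogenization_eq_dual_cone closed_dual_cone)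

lemma convex_cone_homogenization: "convex_cone (homogenization H)"
  by (simp add: homogenization_eq_dual_cone convex_cone_dual_cone)

lemma homogenization_one_iff: "(x, 1) \<in> homogenization H \<longleftrightarrow> x \<in> halfspaces_Inter H"
  by (auto simp: homogenization_def halfspaces_Inter_def)

lemma homogenization_scaled_point:
  assumes "x \<in> halfspaces_Inter H" "0 \<le> t"
  shows "(t *\<^sub>R x, t) \<in> homogenization H"
  using assms by (auto simp: homogenization_def halfspaces_Inter_def intro: mult_left_mono)

lemma convex_cone_rec_cone: "convex_cone (rec_cone S)"
  unfolding convex_cone_iff rec_cone_def
proof (intro conjI ballI allI impI CollectI)
  fix d1 d2 x and c :: real
  assume "d1 \<in> {d. \<forall>x\<in>S. \<forall>c\<ge>0. x + c *\<^sub>R d \<in> S}" "d2 \<in> {d. \<forall>x\<in>S. \<forall>c\<ge>0. x + c *\<^sub>R d \<in> S}"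
    and "x \<in> S" "0 \<le> c"
  then show "x + c *\<^sub>R (d1 + d2) \<in> S"
    by (metis (no_types, lifting) mem_Collect_eq add.assoc scaleR_add_right)
next
  fix d x and k c :: real
  assume "d \<in> {d. \<forall>x\<in>S. \<forall>c\<ge>0. x + c *\<^sub>R d \<in> S}" "0 \<le> k" "x \<in> S" "0 \<le> c"
  then show "x + c *\<^sub>R (k *\<^sub>R d) \<in> S"
    by simp
qed simp

lemma homogenization_zero_iff:
  assumes "x0 \<in> halfspaces_Inter H"
  shows "(y, 0) \<in> homogenization H \<longleftrightarrow> y \<in> rec_cone (halfspaces_Inter H)"
proof
  assume "(y, 0) \<in> homogenization H"
  then have "0 \<le> a \<bullet> y" if "(a, a0) \<in> H" for a a0
    using that by (auto simp: homogenization_def)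
  then show "y \<in> rec_cone (halfspaces_Inter H)"
    by (fastforce simp: rec_cone_def halfspaces_Inter_def inner_add_right intro: add_increasing2)
next
  assume y: "y \<in> rec_cone (halfspaces_Inter H)"
  have "0 \<le> a \<bullet> y" if "(a, a0) \<in> H" for a a0
  proof (rule nonneg_slope_if_bounded_below)
    fix c :: real assume "0 \<le> c"
    then have "x0 + c *\<^sub>R y \<in> halfspaces_Inter H"
      using y assms by (auto simp: rec_cone_def)
    then show "a0 \<le> a \<bullet> x0 + c * (a \<bullet> y)"
      using that by (auto simp: halfspaces_Inter_def inner_add_right)
  qed
  then show "(y, 0) \<in> homogenization H"
    by (auto simp: homogenization_def)
qed

lemma homogenization_pointed:
  assumes "\<And>y. (\<forall>(a, a0)\<in>H. a \<bullet> y = 0) \<Longrightarrow> y = 0"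
    and "z \<in> homogenization H" "- z \<in> homogenization H"
  shows "z = 0"
proof -
  obtain y l where z: "z = (y, l)"
    by fastforce
  have "l = 0" and "\<forall>(a, a0)\<in>H. a \<bullet> y = 0"
    using assms(2,3) unfolding z homogenization_def by (fastforce simp: inner_minus_right)+
  then show ?thesis
    using assms(1) z by (simp add: zero_prod_def)
qed

lemma extreme_ray_of_homogenization_summand:
  assumes ray: "extreme_ray_of (y, l) (homogenization H)" and "0 < l"
    and "a \<in> halfspaces_Inter H" "0 < t" and b: "b \<in> homogenization H" "(t *\<^sub>R a, t) + b = (y, l)"
  shows "a = (1 / l) *\<^sub>R y"
proof -
  have "(t *\<^sub>R a, t) \<in> homogenization H"
    using assms(3,4) by (simp add: homogenization_scaled_point)
  then obtain c where "(t *\<^sub>R a, t) = c *\<^sub>R (y, l)"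
    using extreme_ray_of_summand[OF convex_cone_homogenization ray _ b] by blast
  then have "t = c * l" "t *\<^sub>R a = c *\<^sub>R y"
    by auto
  then have "c / t = 1 / l"
    using \<open>0 < t\<close> by auto
  have "a = (1 / t) *\<^sub>R (t *\<^sub>R a)"
    using \<open>0 < t\<close> by simp
  also have "\<dots> = (c / t) *\<^sub>R y"
    using \<open>t *\<^sub>R a = c *\<^sub>R y\<close> by simp
  finally show ?thesis
    using \<open>c / t = 1 / l\<close> by simp
qed

lemma extreme_ray_of_homogenization_imp_extreme_point_of:
  assumes ray: "extreme_ray_of (y, l) (homogenization H)" and "0 < l"
  shows "(1 / l) *\<^sub>R y extreme_point_of halfspaces_Inter H"
  unfolding extreme_point_of_def
proof (intro conjI ballI notI)
  have "(y, l) \<in> homogenization H"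
    using ray by (simp add: extreme_ray_of_def)
  then have "(1 / l) *\<^sub>R (y, l) \<in> homogenization H"
    using \<open>0 < l\<close> by (intro convex_cone_scaleR[OF convex_cone_homogenization]) simp_all
  then show "(1 / l) *\<^sub>R y \<in> halfspaces_Inter H"
    using \<open>0 < l\<close> by (simp add: homogenization_one_iff[symmetric])
  fix a1 a2 assume a: "a1 \<in> halfspaces_Inter H" "a2 \<in> halfspaces_Inter H"
    and "(1 / l) *\<^sub>R y \<in> open_segment a1 a2"
  then obtain u where "a1 \<noteq> a2" "0 < u" "u < 1" and u: "(1 / l) *\<^sub>R y = (1 - u) *\<^sub>R a1 + u *\<^sub>R a2"
    by (auto simp: in_segment)
  have "(y, l) = (l * (1 - u)) *\<^sub>R (a1, 1) + (l * u) *\<^sub>R (a2, 1)"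
  proof -
    have "y = l *\<^sub>R ((1 / l) *\<^sub>R y)"
      using \<open>0 < l\<close> by simp
    then show ?thesis
      unfolding u by (simp add: algebra_simps)
  qed
  moreover have "(l * (1 - u)) *\<^sub>R (a1, 1) \<in> homogenization H" "(l * u) *\<^sub>R (a2, 1) \<in> homogenization H"
    using a \<open>0 < l\<close> \<open>0 < u\<close> \<open>u < 1\<close> by (simp_all add: homogenization_scaled_point)
  ultimately have "a1 = (1 / l) *\<^sub>R y" "a2 = (1 / l) *\<^sub>R y"
    using extreme_ray_of_homogenization_summand[OF ray \<open>0 < l\<close>, where a = a1 and t = "l * (1 - u)"
        and b = "(l * u) *\<^sub>R (a2, 1)"]
      extreme_ray_of_homogenization_summand[OF ray \<open>0 < l\<close>, where a = a2 and t = "l * u"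
        and b = "(l * (1 - u)) *\<^sub>R (a1, 1)"]
      a \<open>0 < l\<close> \<open>0 < u\<close> \<open>u < 1\<close> by (simp_all add: add.commute)
  with \<open>a1 \<noteq> a2\<close> show False
    by simp
qed

lemma extreme_ray_of_homogenization_imp_extreme_dir:
  assumes ray: "extreme_ray_of (y, 0) (homogenization H)" and x0: "x0 \<in> halfspaces_Inter H"
  shows "extreme_dir (halfspaces_Inter H) y"
  unfolding extreme_dir_def
proof (intro conjI extreme_ray_ofI[OF convex_cone_rec_cone])
  show "halfspaces_Inter H \<noteq> {}"
    using x0 by blast
  have "(y, 0 :: real) \<noteq> 0" "(y, 0) \<in> homogenization H"
    using ray by (simp_all add: extreme_ray_of_def)
  then show "y \<noteq> 0" "y \<in> rec_cone (halfspaces_Inter H)"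
    using homogenization_zero_iff[OF x0] by (simp_all add: zero_prod_def)
  fix a1 a2 assume "a1 \<in> rec_cone (halfspaces_Inter H)" "a2 \<in> rec_cone (halfspaces_Inter H)" "a1 + a2 = y"
  then have "(a1, 0) \<in> homogenization H" "(a2, 0) \<in> homogenization H" "(a1, 0) + (a2, 0) = (y, 0 :: real)"
    using homogenization_zero_iff[OF x0] by simp_all
  then obtain c where "0 \<le> c" "(a1, 0 :: real) = c *\<^sub>R (y, 0)"
    using extreme_ray_of_summand[OF convex_cone_homogenization ray] by blast
  then show "\<exists>c\<ge>0. a1 = c *\<^sub>R y"
    by auto
qed

lemma valid_ineq_if_valid_on_extreme_points_rays:
  fixes H :: "('a::euclidean_space \<times> real) set"
  assumes line_free: "\<And>y. (\<forall>(a, a0)\<in>H. a \<bullet> y = 0) \<Longrightarrow> y = 0"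
    and R: "complete_extreme_rays (halfspaces_Inter H) R"
    and points: "\<And>e. e extreme_point_of halfspaces_Inter H \<Longrightarrow> \<beta> \<le> \<alpha> \<bullet> e"
    and rays: "\<And>r. r \<in> R \<Longrightarrow> 0 \<le> \<alpha> \<bullet> r"
    and x: "x \<in> halfspaces_Inter H"
  shows "\<beta> \<le> \<alpha> \<bullet> x"
proof -
  have "0 \<le> (\<alpha>, - \<beta>) \<bullet> (x, 1)"
  proof (rule nonneg_on_pointed_cone_if_nonneg_on_extreme_rays
      [OF closed_homogenization convex_cone_homogenization homogenization_pointed[OF line_free]])
    show "(x, 1) \<in> homogenization H"
      using x by (simp add: homogenization_one_iff)
    fix v assume ray: "extreme_ray_of v (homogenization H)"
    obtain y l where v: "v = (y, l)"
      by fastforce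
    have "0 \<le> l"
      using ray by (auto simp: v extreme_ray_of_def homogenization_def)
    show "0 \<le> (\<alpha>, - \<beta>) \<bullet> v"
    proof (cases "l = 0")
      case True
      then have "extreme_dir (halfspaces_Inter H) y"
        using extreme_ray_of_homogenization_imp_extreme_dir ray x v by blast
      then obtain r c where "r \<in> R" "0 < c" "y = c *\<^sub>R r"
        using R by (auto simp: complete_extreme_rays_def)
      then show ?thesis
        using rays[of r] True by (simp add: v inner_Pair)
    next
      case False
      then have "0 < l"
        using \<open>0 \<le> l\<close> by simp
      then have "(1 / l) *\<^sub>R y extreme_point_of halfspaces_Inter H"
        using extreme_ray_of_homogenization_imp_extreme_point_of ray unfolding v by blast
      then have "\<beta> \<le> \<alpha> \<bullet> ((1 / l) *\<^sub>R y)"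
        by (rule points)
      then show ?thesis
        using False \<open>0 \<le> l\<close> by (simp add: v inner_Pair field_simps)
    qed
  qed
  then show ?thesis
    by (simp add: inner_Pair)
qed

definition valid_ineqs :: "'a::real_inner set \<Rightarrow> ('a \<times> real) set" where
  "valid_ineqs S = {(\<alpha>, \<beta>). \<forall>x\<in>S. \<beta> \<le> \<alpha> \<bullet> x}"

lemma valid_ineqs_eq_dual_cone: "valid_ineqs S = dual_cone ((\<lambda>x. (x, -1)) ` S)"
  by (auto simp: valid_ineqs_def dual_cone_def inner_Pair inner_commute)

lemma convex_cone_valid_ineqs: "convex_cone (valid_ineqs S)"
  by (simp add: valid_ineqs_eq_dual_cone convex_cone_dual_cone)

lemma valid_ineqs_antimono: "S \<subseteq> T \<Longrightarrow> valid_ineqs T \<subseteq> valid_ineqs S"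
  by (auto simp: valid_ineqs_def)

lemma valid_ineqs_closure_convex_hull:
  fixes S :: "'a::euclidean_space set"
  shows "valid_ineqs (closure (convex hull S)) = valid_ineqs S"
proof
  show "valid_ineqs (closure (convex hull S)) \<subseteq> valid_ineqs S"
    by (intro valid_ineqs_antimono subset_trans[OF hull_subset closure_subset])
  show "valid_ineqs S \<subseteq> valid_ineqs (closure (convex hull S))"
  proof (clarify)
    fix \<alpha> \<beta> assume "(\<alpha>, \<beta>) \<in> valid_ineqs S"
    then have "S \<subseteq> {x. \<beta> \<le> \<alpha> \<bullet> x}"
      by (auto simp: valid_ineqs_def)
    then have "closure (convex hull S) \<subseteq> {x. \<beta> \<le> \<alpha> \<bullet> x}"
      by (intro closure_minimal hull_minimal) (auto simp: convex_halfspace_ge closed_halfspace_ge)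
    then show "(\<alpha>, \<beta>) \<in> valid_ineqs (closure (convex hull S))"
      by (auto simp: valid_ineqs_def)
  qed
qed

lemma mem_if_valid_ineqs:
  fixes C :: "'a::euclidean_space set"
  assumes "closed C" "convex C" and valid: "\<And>\<alpha> \<beta>. (\<alpha>, \<beta>) \<in> valid_ineqs C \<Longrightarrow> \<beta> \<le> \<alpha> \<bullet> y"
  shows "y \<in> C"
proof (rule ccontr)
  assume "y \<notin> C"
  then obtain a b where "a \<bullet> y < b" "\<forall>x\<in>C. b < a \<bullet> x"
    using separating_hyperplane_closed_point[OF assms(2,1)] by blast
  moreover have "(a, b) \<in> valid_ineqs C"
    using calculation(2) by (auto simp: valid_ineqs_def less_imp_le)
  ultimately show False
    using valid by fastforce
qed

lemma valid_ineqs_rec_cone_nonneg: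
  assumes "(\<alpha>, \<beta>) \<in> valid_ineqs S" "x \<in> S" "d \<in> rec_cone S"
  shows "0 \<le> \<alpha> \<bullet> d"
proof (rule nonneg_slope_if_bounded_below)
  fix c :: real assume "0 \<le> c"
  then have "x + c *\<^sub>R d \<in> S"
    using assms(2,3) by (auto simp: rec_cone_def)
  then show "\<beta> \<le> \<alpha> \<bullet> x + c * (\<alpha> \<bullet> d)"
    using assms(1) by (auto simp: valid_ineqs_def inner_add_right)
qed

lemma extreme_ray_of_valid_ineqs_slack_point:
  assumes "extreme_ray_of (\<alpha>, \<beta>) (valid_ineqs C)"
  obtains x1 where "x1 \<in> C" "\<beta> < \<alpha> \<bullet> x1"
proof -
  have "- (\<alpha>, \<beta>) \<notin> valid_ineqs C"
    by (rule extreme_ray_of_neg_notin[OF convex_cone_valid_ineqs assms])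
  then show ?thesis
    using that by (force simp: valid_ineqs_def)
qed

section \<open>Extreme rays of the point-ray cone and facets\<close>

lemma prlp_cone_eq_dual_cone:
  "prlp_cone V R = dual_cone ((\<lambda>p. (p, -1)) ` V \<union> (\<lambda>r. (r, 0)) ` R)"
  by (auto simp: prlp_cone_def dual_cone_def inner_Pair inner_commute ball_Un)

lemma extreme_ray_of_prlp_cone_rigid:
  assumes "finite V" "finite R" and ray: "extreme_ray_of (\<alpha>, \<beta>) (prlp_cone V R)"
    and tight_points: "\<And>p. p \<in> V \<Longrightarrow> \<alpha> \<bullet> p = \<beta> \<Longrightarrow> \<gamma> \<bullet> p = \<delta>"
    and tight_rays: "\<And>r. r \<in> R \<Longrightarrow> \<alpha> \<bullet> r = 0 \<Longrightarrow> \<gamma> \<bullet> r = 0"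
  shows "\<exists>k. (\<gamma>, \<delta>) = k *\<^sub>R (\<alpha>, \<beta>)"
proof (rule extreme_ray_of_dual_cone_rigid)
  show "finite ((\<lambda>p. (p, -1)) ` V \<union> (\<lambda>r. (r, 0)) ` R)"
    using assms(1,2) by simp
  show "extreme_ray_of (\<alpha>, \<beta>) (dual_cone ((\<lambda>p. (p, -1)) ` V \<union> (\<lambda>r. (r, 0)) ` R))"
    using ray by (simp only: prlp_cone_eq_dual_cone)
  fix g assume "g \<in> (\<lambda>p. (p, -1)) ` V \<union> (\<lambda>r. (r, 0 :: real)) ` R" "g \<bullet> (\<alpha>, \<beta>) = 0"
  then show "g \<bullet> (\<gamma>, \<delta>) = 0"
    using tight_points tight_rays by (auto simp: inner_Pair inner_commute)
qed

lemma hyperplane_subset_proportional: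
  fixes \<alpha> \<gamma> :: "'a::real_inner"
  assumes "\<alpha> \<noteq> 0" and sub: "{x. \<alpha> \<bullet> x = \<beta>} \<subseteq> {x. \<gamma> \<bullet> x = \<delta>}"
  shows "\<exists>k. \<gamma> = k *\<^sub>R \<alpha> \<and> \<delta> = k * \<beta>"
proof -
  define k where "k = (\<gamma> \<bullet> \<alpha>) / (\<alpha> \<bullet> \<alpha>)"
  define x0 where "x0 = (\<beta> / (\<alpha> \<bullet> \<alpha>)) *\<^sub>R \<alpha>"
  have "\<alpha> \<bullet> x0 = \<beta>"
    using assms(1) by (simp add: x0_def)
  then have "\<gamma> \<bullet> x0 = \<delta>"
    using sub by blast
  \<comment> \<open>the component of \<open>\<gamma>\<close> orthogonal to \<open>\<alpha>\<close> vanishes on the hyperplane's direction, hence on itself\<close>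
  define y where "y = \<gamma> - k *\<^sub>R \<alpha>"
  have "\<alpha> \<bullet> y = 0"
    using assms(1) by (simp add: y_def k_def inner_diff_right inner_commute)
  then have "\<alpha> \<bullet> (x0 + y) = \<beta>"
    using \<open>\<alpha> \<bullet> x0 = \<beta>\<close> by (simp add: inner_add_right)
  then have "\<gamma> \<bullet> (x0 + y) = \<delta>"
    using sub by blast
  then have "\<gamma> \<bullet> y = 0"
    using \<open>\<gamma> \<bullet> x0 = \<delta>\<close> by (simp add: inner_add_right)
  then have "y \<bullet> y = 0"
    using \<open>\<alpha> \<bullet> y = 0\<close> by (simp add: y_def inner_diff_left)
  then have "\<gamma> = k *\<^sub>R \<alpha>"
    by (simp add: y_def)
  moreover have "\<delta> = k * \<beta>"
    using \<open>\<gamma> \<bullet> x0 = \<delta>\<close> \<open>\<alpha> \<bullet> x0 = \<beta>\<close> calculation by simp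
  ultimately show ?thesis
    by blast
qed

lemma aff_dim_eq_if_unique_hyperplane:
  fixes F :: "'a::euclidean_space set"
  assumes "\<alpha> \<noteq> 0" "F \<subseteq> {x. \<alpha> \<bullet> x = \<beta>}" "p0 \<in> F"
    and unique: "\<And>a b. F \<subseteq> {x. a \<bullet> x = b} \<Longrightarrow> \<exists>k. a = k *\<^sub>R \<alpha>"
  shows "aff_dim F = int DIM('a) - 1"
proof (rule antisym)
  show "aff_dim F \<le> int DIM('a) - 1"
    using aff_dim_subset[OF assms(2)] assms(1) by simp
  show "int DIM('a) - 1 \<le> aff_dim F"
  proof (rule ccontr)
    assume "\<not> int DIM('a) - 1 \<le> aff_dim F"
    then have "aff_dim (insert (p0 + \<alpha>) F) < int DIM('a)"
      by (simp add: aff_dim_insert)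
    then obtain a b where "a \<noteq> 0" and ab: "insert (p0 + \<alpha>) F \<subseteq> {x. a \<bullet> x = b}"
      by (rule aff_lowdim_subset_hyperplane)
    then obtain k where "a = k *\<^sub>R \<alpha>"
      using unique by blast
    moreover have "a \<bullet> (p0 + \<alpha>) = a \<bullet> p0"
      using ab assms(3) by auto
    ultimately have "k * (\<alpha> \<bullet> \<alpha>) = 0"
      by (simp add: inner_add_right)
    then show False
      using \<open>a \<noteq> 0\<close> \<open>a = k *\<^sub>R \<alpha>\<close> assms(1) by simp
  qed
qed

lemma facet_ineq_if_slack_point:
  fixes C :: "(real^'n) set"
  assumes "convex C" and valid: "\<And>x. x \<in> C \<Longrightarrow> \<beta> \<le> \<alpha> \<bullet> x"
    and dim: "aff_dim {x \<in> C. \<alpha> \<bullet> x = \<beta>} = int CARD('n) - 1"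
    and "x1 \<in> C" "\<beta> < \<alpha> \<bullet> x1"
  shows "facet_ineq \<alpha> \<beta> C"
proof -
  define F where "F = {x \<in> C. \<alpha> \<bullet> x = \<beta>}"
  have "F = C \<inter> {x. \<alpha> \<bullet> x = \<beta>}"
    by (auto simp: F_def)
  then have "F face_of C"
    using face_of_Int_supporting_hyperplane_ge[OF \<open>convex C\<close>] valid by simp
  have "F \<noteq> {}"
  proof
    assume "F = {}"
    then have "aff_dim F = -1"
      by simp
    then show False
      using dim by (simp add: F_def)
  qed
  have "affine hull F \<subseteq> {x. \<alpha> \<bullet> x = \<beta>}"
    by (rule hull_minimal) (auto simp: F_def affine_hyperplane)
  then have "x1 \<notin> affine hull F"
    using \<open>\<beta> < \<alpha> \<bullet> x1\<close> by auto
  then have "aff_dim (insert x1 F) = int CARD('n)"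
    using dim by (simp add: aff_dim_insert F_def)
  moreover have "aff_dim (insert x1 F) \<le> aff_dim C"
    using \<open>x1 \<in> C\<close> by (intro aff_dim_subset) (auto simp: F_def)
  moreover have "aff_dim C \<le> int CARD('n)"
    using aff_dim_le_DIM[of C] by simp
  ultimately have "aff_dim C = int CARD('n)"
    by linarith
  then show ?thesis
    unfolding facet_ineq_def facet_of_def F_def[symmetric]
    using valid \<open>F face_of C\<close> \<open>F \<noteq> {}\<close> dim by (simp add: F_def)
qed

lemma subset_if_prlp_cone_eq_valid_ineqs:
  fixes C :: "(real^'n) set"
  assumes "closed C" "convex C" and eq: "prlp_cone V R = valid_ineqs C"
  shows "V \<subseteq> C"
proof
  fix p assume "p \<in> V"
  show "p \<in> C"
  proof (rule mem_if_valid_ineqs[OF assms(1,2)])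
    fix \<gamma> \<delta> assume "(\<gamma>, \<delta>) \<in> valid_ineqs C"
    then show "\<delta> \<le> \<gamma> \<bullet> p"
      using \<open>p \<in> V\<close> eq by (auto simp: prlp_cone_def)
  qed
qed

lemma add_mem_if_prlp_cone_eq_valid_ineqs:
  fixes C :: "(real^'n) set"
  assumes "closed C" "convex C" and eq: "prlp_cone V R = valid_ineqs C"
    and "p \<in> C" "r \<in> R"
  shows "p + r \<in> C"
proof (rule mem_if_valid_ineqs[OF assms(1,2)])
  fix \<gamma> \<delta> assume "(\<gamma>, \<delta>) \<in> valid_ineqs C"
  moreover from this have "(\<gamma>, \<delta>) \<in> prlp_cone V R"
    using eq by simp
  ultimately have "\<delta> \<le> \<gamma> \<bullet> p" "0 \<le> \<gamma> \<bullet> r"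
    using assms(4,5) by (auto simp: prlp_cone_def valid_ineqs_def)
  then show "\<delta> \<le> \<gamma> \<bullet> (p + r)"
    by (simp add: inner_add_right)
qed

lemma extreme_ray_of_prlp_cone_tight_point:
  assumes "finite V" "finite R" "extreme_ray_of (\<alpha>, \<beta>) (prlp_cone V R)" "\<alpha> \<noteq> 0"
  obtains p0 where "p0 \<in> V" "\<alpha> \<bullet> p0 = \<beta>"
proof (rule ccontr)
  assume "\<not> thesis"
  then have "\<exists>k. (0, 1) = k *\<^sub>R (\<alpha>, \<beta>)"
    using that by (intro extreme_ray_of_prlp_cone_rigid[OF assms(1-3)]) auto
  then show False
    using \<open>\<alpha> \<noteq> 0\<close> by auto
qed

lemma hyperplane_through_tight_face_proportional:
  fixes C :: "(real^'n) set"
  assumes "closed C" "convex C" "finite V" "finite R"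
    and eq: "prlp_cone V R = valid_ineqs C"
    and ray: "extreme_ray_of (\<alpha>, \<beta>) (prlp_cone V R)"
    and "p0 \<in> V" "\<alpha> \<bullet> p0 = \<beta>" and F_sub: "{x \<in> C. \<alpha> \<bullet> x = \<beta>} \<subseteq> {x. a \<bullet> x = b}"
  shows "\<exists>k. a = k *\<^sub>R \<alpha>"
proof -
  have "V \<subseteq> C"
    using subset_if_prlp_cone_eq_valid_ineqs[OF assms(1,2) eq] .
  have "\<exists>k. (a, b) = k *\<^sub>R (\<alpha>, \<beta>)"
  proof (rule extreme_ray_of_prlp_cone_rigid[OF assms(3,4) ray])
    show "a \<bullet> p = b" if "p \<in> V" "\<alpha> \<bullet> p = \<beta>" for p
      using that F_sub \<open>V \<subseteq> C\<close> by auto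
    show "a \<bullet> r = 0" if "r \<in> R" "\<alpha> \<bullet> r = 0" for r
    proof -
      have "p0 \<in> C" "p0 + r \<in> C"
        using \<open>V \<subseteq> C\<close> \<open>p0 \<in> V\<close> add_mem_if_prlp_cone_eq_valid_ineqs[OF assms(1,2) eq _ \<open>r \<in> R\<close>] by auto
      then have "a \<bullet> p0 = b" "a \<bullet> (p0 + r) = b"
        using F_sub \<open>\<alpha> \<bullet> p0 = \<beta>\<close> that(2) by (auto simp: inner_add_right)
      then show ?thesis
        by (simp add: inner_add_right)
    qed
  qed
  then show ?thesis
    by auto
qed

lemma facet_ineq_if_extreme_ray_prlp_cone:
  fixes C :: "(real^'n) set"
  assumes "closed C" "convex C" "finite V" "finite R"
    and eq: "prlp_cone V R = valid_ineqs C"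
    and ray: "extreme_ray_of (\<alpha>, \<beta>) (prlp_cone V R)" and "\<alpha> \<noteq> 0"
  shows "facet_ineq \<alpha> \<beta> C"
proof -
  have valid: "\<beta> \<le> \<alpha> \<bullet> x" if "x \<in> C" for x
    using ray eq that by (auto simp: extreme_ray_of_def valid_ineqs_def)
  obtain p0 where "p0 \<in> V" "\<alpha> \<bullet> p0 = \<beta>"
    using extreme_ray_of_prlp_cone_tight_point[OF assms(3,4) ray \<open>\<alpha> \<noteq> 0\<close>] .
  then have "p0 \<in> {x \<in> C. \<alpha> \<bullet> x = \<beta>}"
    using subset_if_prlp_cone_eq_valid_ineqs[OF assms(1,2) eq] by auto
  then have "aff_dim {x \<in> C. \<alpha> \<bullet> x = \<beta>} = int DIM(real^'n) - 1"
    using hyperplane_through_tight_face_proportional[OF assms(1-4) eq ray \<open>p0 \<in> V\<close> \<open>\<alpha> \<bullet> p0 = \<beta>\<close>]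
    by (intro aff_dim_eq_if_unique_hyperplane[OF \<open>\<alpha> \<noteq> 0\<close>]) auto
  moreover obtain x1 where "x1 \<in> C" "\<beta> < \<alpha> \<bullet> x1"
    using extreme_ray_of_valid_ineqs_slack_point ray eq by metis
  ultimately show ?thesis
    using facet_ineq_if_slack_point[OF \<open>convex C\<close> valid] by simp
qed

lemma facet_ineq_affine_hull:
  fixes C :: "(real^'n) set"
  assumes full: "aff_dim C = int CARD('n)" and facet: "facet_ineq \<alpha> \<beta> C"
  shows "\<alpha> \<noteq> 0" "affine hull {x \<in> C. \<alpha> \<bullet> x = \<beta>} = {x. \<alpha> \<bullet> x = \<beta>}"
proof -
  define F where "F = {x \<in> C. \<alpha> \<bullet> x = \<beta>}"
  have "F \<noteq> {}" "aff_dim F = int CARD('n) - 1"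
    using facet full by (auto simp: facet_ineq_def facet_of_def F_def)
  show "\<alpha> \<noteq> 0"
  proof
    assume "\<alpha> = 0"
    with \<open>F \<noteq> {}\<close> have "F = C"
      by (auto simp: F_def)
    with \<open>aff_dim F = int CARD('n) - 1\<close> full show False
      by simp
  qed
  show "affine hull F = {x. \<alpha> \<bullet> x = \<beta>}"
  proof (rule affine_dim_equal[OF affine_affine_hull affine_hyperplane])
    show "affine hull F \<noteq> {}"
      using \<open>F \<noteq> {}\<close> by simp
    show "affine hull F \<subseteq> {x. \<alpha> \<bullet> x = \<beta>}"
      by (rule hull_minimal) (auto simp: F_def affine_hyperplane)
    show "aff_dim (affine hull F) = aff_dim {x. \<alpha> \<bullet> x = \<beta>}"
      using \<open>aff_dim F = int CARD('n) - 1\<close> \<open>\<alpha> \<noteq> 0\<close> by simp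
  qed
qed

lemma valid_ineq_tight_on_facet_eq_multiple:
  fixes C :: "(real^'n) set"
  assumes full: "aff_dim C = int CARD('n)" and facet: "facet_ineq \<alpha> \<beta> C"
    and valid: "(\<gamma>, \<delta>) \<in> valid_ineqs C" and tight: "\<And>x. x \<in> C \<Longrightarrow> \<alpha> \<bullet> x = \<beta> \<Longrightarrow> \<gamma> \<bullet> x = \<delta>"
  shows "\<exists>c\<ge>0. (\<gamma>, \<delta>) = c *\<^sub>R (\<alpha>, \<beta>)"
proof -
  have "\<alpha> \<noteq> 0" and hull: "affine hull {x \<in> C. \<alpha> \<bullet> x = \<beta>} = {x. \<alpha> \<bullet> x = \<beta>}"
    using facet_ineq_affine_hull[OF full facet] by simp_all
  have "affine hull {x \<in> C. \<alpha> \<bullet> x = \<beta>} \<subseteq> {x. \<gamma> \<bullet> x = \<delta>}"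
    using tight by (intro hull_minimal) (auto simp: affine_hyperplane)
  then obtain k where k: "\<gamma> = k *\<^sub>R \<alpha>" "\<delta> = k * \<beta>"
    using hyperplane_subset_proportional[OF \<open>\<alpha> \<noteq> 0\<close>] hull by metis
  obtain x1 where "x1 \<in> C" "\<beta> < \<alpha> \<bullet> x1"
  proof (rule ccontr)
    assume "\<not> thesis"
    then have "C \<subseteq> {x. \<alpha> \<bullet> x = \<beta>}"
      using that facet by (force simp: facet_ineq_def)
    then have "aff_dim C \<le> aff_dim {x. \<alpha> \<bullet> x = \<beta>}"
      by (rule aff_dim_subset)
    then show False
      using full \<open>\<alpha> \<noteq> 0\<close> by simp
  qed
  have "\<delta> \<le> \<gamma> \<bullet> x1"
    using valid \<open>x1 \<in> C\<close> by (auto simp: valid_ineqs_def)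
  then have "0 \<le> k * (\<alpha> \<bullet> x1 - \<beta>)"
    using k by (simp add: algebra_simps)
  then have "0 \<le> k"
    using \<open>\<beta> < \<alpha> \<bullet> x1\<close> by (simp add: zero_le_mult_iff)
  with k show ?thesis
    by auto
qed

lemma extreme_ray_of_valid_ineqs_if_facet_ineq:
  fixes C :: "(real^'n) set"
  assumes full: "aff_dim C = int CARD('n)" and facet: "facet_ineq \<alpha> \<beta> C"
  shows "extreme_ray_of (\<alpha>, \<beta>) (valid_ineqs C)"
proof (rule extreme_ray_ofI[OF convex_cone_valid_ineqs])
  show "(\<alpha>, \<beta>) \<in> valid_ineqs C"
    using facet by (auto simp: facet_ineq_def valid_ineqs_def)
  show "(\<alpha>, \<beta>) \<noteq> 0"
    using facet_ineq_affine_hull(1)[OF full facet] by (simp add: zero_prod_def)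
  fix a1 a2 assume a: "a1 \<in> valid_ineqs C" "a2 \<in> valid_ineqs C" "a1 + a2 = (\<alpha>, \<beta>)"
  obtain \<gamma>1 \<delta>1 \<gamma>2 \<delta>2 where a12: "a1 = (\<gamma>1, \<delta>1)" "a2 = (\<gamma>2, \<delta>2)"
    by fastforce
  \<comment> \<open>on the facet, two nonnegative slacks add up to the zero slack of \<open>(\<alpha>, \<beta>)\<close>\<close>
  have "\<gamma>1 \<bullet> x = \<delta>1" if "x \<in> C" "\<alpha> \<bullet> x = \<beta>" for x
  proof -
    have "\<delta>1 \<le> \<gamma>1 \<bullet> x" "\<delta>2 \<le> \<gamma>2 \<bullet> x"
      using a(1,2) that(1) by (auto simp: a12 valid_ineqs_def)
    moreover have "\<gamma>1 + \<gamma>2 = \<alpha>" "\<delta>1 + \<delta>2 = \<beta>"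
      using a(3) by (auto simp: a12)
    then have "\<gamma>1 \<bullet> x + \<gamma>2 \<bullet> x = \<delta>1 + \<delta>2"
      using that(2) by (metis inner_add_left)
    ultimately show ?thesis
      by linarith
  qed
  then show "\<exists>c\<ge>0. a1 = c *\<^sub>R (\<alpha>, \<beta>)"
    using valid_ineq_tight_on_facet_eq_multiple[OF full facet] a(1) by (simp add: a12)
qed

lemma term_poly_eq_halfspaces_Inter:
  "term_poly A b Dt = halfspaces_Inter (range (\<lambda>i. (A $ i, b $ i)) \<union> Dt)"
  by (auto simp: term_poly_def polyhedron_of_def halfspaces_Inter_def matrix_vector_mul_component ball_Un)

lemma polyhedron_halfspaces_Inter:
  fixes H :: "('a::euclidean_space \<times> real) set"
  assumes "finite H"
  shows "polyhedron (halfspaces_Inter H)"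
proof -
  have "halfspaces_Inter H = \<Inter> ((\<lambda>(a, a0). {x. a0 \<le> a \<bullet> x}) ` H)"
    by (auto simp: halfspaces_Inter_def)
  moreover have "polyhedron (\<Inter> ((\<lambda>(a, a0). {x. a0 \<le> a \<bullet> x}) ` H))"
    using assms by (intro polyhedron_Inter) (auto intro: polyhedron_halfspace_ge)
  ultimately show ?thesis
    by simp
qed

lemma lineality_trivial_if_extreme_point:
  assumes "v extreme_point_of polyhedron_of A b" and "\<And>i. A $ i \<bullet> y = 0"
  shows "y = 0"
proof (rule extreme_point_of_plus_minus[OF assms(1)])
  have "A *v y = 0"
    using assms(2) by (simp add: vec_eq_iff matrix_vector_mul_component)
  moreover have "v \<in> polyhedron_of A b"
    using assms(1) by (simp add: extreme_point_of_def)
  ultimately show "v + y \<in> polyhedron_of A b" "v - y \<in> polyhedron_of A b"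
    by (simp_all add: polyhedron_of_def matrix_vector_right_distrib matrix_vector_mult_diff_distrib)
qed

lemma valid_on_term_poly_if_prlp_cone:
  assumes pointed: "v extreme_point_of polyhedron_of A b"
    and rays: "\<forall>t\<in>T. complete_extreme_rays (term_poly A b (D t)) (R t)"
    and prlp: "(\<alpha>, \<beta>) \<in> prlp_cone (Pstar A b T D) (\<Union>t\<in>T. R t)"
    and "t \<in> T" "x \<in> term_poly A b (D t)"
  shows "\<beta> \<le> \<alpha> \<bullet> x"
proof (rule valid_ineq_if_valid_on_extreme_points_rays[where H = "range (\<lambda>i. (A $ i, b $ i)) \<union> D t"])
  show "y = 0" if "\<forall>(a, a0)\<in>range (\<lambda>i. (A $ i, b $ i)) \<union> D t. a \<bullet> y = 0" for y
    using lineality_trivial_if_extreme_point[OF pointed] that by auto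
  show "complete_extreme_rays (halfspaces_Inter (range (\<lambda>i. (A $ i, b $ i)) \<union> D t)) (R t)"
    using rays \<open>t \<in> T\<close> by (simp add: term_poly_eq_halfspaces_Inter)
  show "\<beta> \<le> \<alpha> \<bullet> e" if "e extreme_point_of halfspaces_Inter (range (\<lambda>i. (A $ i, b $ i)) \<union> D t)" for e
    using prlp that \<open>t \<in> T\<close> by (auto simp: prlp_cone_def Pstar_def term_poly_eq_halfspaces_Inter)
  show "0 \<le> \<alpha> \<bullet> r" if "r \<in> R t" for r
    using prlp that \<open>t \<in> T\<close> by (auto simp: prlp_cone_def)
  show "x \<in> halfspaces_Inter (range (\<lambda>i. (A $ i, b $ i)) \<union> D t)"
    using \<open>x \<in> term_poly A b (D t)\<close> by (simp add: term_poly_eq_halfspaces_Inter)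
qed

lemma prlp_cone_Pstar_eq_valid_ineqs:
  assumes pointed: "v extreme_point_of polyhedron_of A b"
    and rays: "\<forall>t\<in>T. complete_extreme_rays (term_poly A b (D t)) (R t)"
  shows "prlp_cone (Pstar A b T D) (\<Union>t\<in>T. R t) = valid_ineqs (disj_hull A b T D)"
  unfolding disj_hull_def valid_ineqs_closure_convex_hull
proof
  show "prlp_cone (Pstar A b T D) (\<Union>t\<in>T. R t) \<subseteq> valid_ineqs (\<Union>t\<in>T. term_poly A b (D t))"
    using valid_on_term_poly_if_prlp_cone[OF pointed rays] by (auto simp: valid_ineqs_def)
  show "valid_ineqs (\<Union>t\<in>T. term_poly A b (D t)) \<subseteq> prlp_cone (Pstar A b T D) (\<Union>t\<in>T. R t)"
  proof (clarify)
    fix \<alpha> \<beta> assume valid: "(\<alpha>, \<beta>) \<in> valid_ineqs (\<Union>t\<in>T. term_poly A b (D t))"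
    then have valid_t: "(\<alpha>, \<beta>) \<in> valid_ineqs (term_poly A b (D t))" if "t \<in> T" for t
      using valid_ineqs_antimono[of "term_poly A b (D t)" "\<Union>t\<in>T. term_poly A b (D t)"] that by blast
    have "\<beta> \<le> \<alpha> \<bullet> p" if "p \<in> Pstar A b T D" for p
      using that valid_t by (auto simp: Pstar_def extreme_point_of_def valid_ineqs_def)
    moreover have "0 \<le> \<alpha> \<bullet> r" if "t \<in> T" "r \<in> R t" for t r
    proof -
      have "extreme_dir (term_poly A b (D t)) r"
        using rays that by (auto simp: complete_extreme_rays_def)
      then obtain x where "x \<in> term_poly A b (D t)" "r \<in> rec_cone (term_poly A b (D t))"
        by (auto simp: extreme_dir_def extreme_ray_of_def)
      then show ?thesis
        using valid_ineqs_rec_cone_nonneg valid_t \<open>t \<in> T\<close> by blast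
    qed
    ultimately show "(\<alpha>, \<beta>) \<in> prlp_cone (Pstar A b T D) (\<Union>t\<in>T. R t)"
      by (auto simp: prlp_cone_def)
  qed
qed

theorem corollary3:
  fixes A :: "real^'n^'m" and b :: "real^'m" and I :: "'n set"
    and T :: "'t set" and D :: "'t \<Rightarrow> ((real^'n) \<times> real) set"
    and R :: "'t \<Rightarrow> (real^'n) set"
  assumes rational_A: "\<forall>i j. A $ i $ j \<in> \<rat>"
    and rational_b: "\<forall>i. b $ i \<in> \<rat>"
    and full_dim: "aff_dim (polyhedron_of A b) = int CARD('n)"
    and pointed: "\<exists>v. v extreme_point_of (polyhedron_of A b)"
    and finite_T: "finite T"
    and finite_D: "\<forall>t\<in>T. finite (D t)"
    and valid_disj: "mixed_int_hull A b I \<subseteq> disj_hull A b T D"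
    and rays: "\<forall>t\<in>T. complete_extreme_rays (term_poly A b (D t)) (R t)"
  shows "proper (Pstar A b T D) (\<Union>t\<in>T. R t) (mixed_int_hull A b I)
    \<and> (\<forall>\<alpha> \<beta>. extreme_ray_of (\<alpha>, \<beta>) (prlp_cone (Pstar A b T D) (\<Union>t\<in>T. R t)) \<and> \<alpha> \<noteq> 0
          \<longrightarrow> facet_ineq \<alpha> \<beta> (disj_hull A b T D))
    \<and> (aff_dim (disj_hull A b T D) = int CARD('n) \<longrightarrow>
        (\<forall>\<alpha> \<beta>. facet_ineq \<alpha> \<beta> (disj_hull A b T D)
          \<longrightarrow> (\<alpha>, \<beta>) \<in> prlp_cone (Pstar A b T D) (\<Union>t\<in>T. R t)
            \<and> extreme_ray_of (\<alpha>, \<beta>) (prlp_cone (Pstar A b T D) (\<Union>t\<in>T. R t))))"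
proof -
  obtain v where "v extreme_point_of polyhedron_of A b"
    using pointed by blast
  then have eq: "prlp_cone (Pstar A b T D) (\<Union>t\<in>T. R t) = valid_ineqs (disj_hull A b T D)"
    using rays by (rule prlp_cone_Pstar_eq_valid_ineqs)
  have "finite (Pstar A b T D)"
    using finite_T finite_D unfolding Pstar_def term_poly_eq_halfspaces_Inter
    by (auto intro!: finite_polyhedron_extreme_points polyhedron_halfspaces_Inter)
  moreover have "finite (\<Union>t\<in>T. R t)"
    using finite_T rays by (auto simp: complete_extreme_rays_def)
  moreover have "closed (disj_hull A b T D)" "convex (disj_hull A b T D)"
    by (simp_all add: disj_hull_def convex_closure)
  ultimately have facets: "facet_ineq \<alpha> \<beta> (disj_hull A b T D)"
    if "extreme_ray_of (\<alpha>, \<beta>) (prlp_cone (Pstar A b T D) (\<Union>t\<in>T. R t))" "\<alpha> \<noteq> 0" for \<alpha> \<beta>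
    using facet_ineq_if_extreme_ray_prlp_cone eq that by blast
  have rays_of_facets: "(\<alpha>, \<beta>) \<in> prlp_cone (Pstar A b T D) (\<Union>t\<in>T. R t)
      \<and> extreme_ray_of (\<alpha>, \<beta>) (prlp_cone (Pstar A b T D) (\<Union>t\<in>T. R t))"
    if "aff_dim (disj_hull A b T D) = int CARD('n)" "facet_ineq \<alpha> \<beta> (disj_hull A b T D)" for \<alpha> \<beta>
  proof -
    have "extreme_ray_of (\<alpha>, \<beta>) (prlp_cone (Pstar A b T D) (\<Union>t\<in>T. R t))"
      unfolding eq using that by (rule extreme_ray_of_valid_ineqs_if_facet_ineq)
    then show ?thesis
      unfolding extreme_ray_of_def by blast
  qed
  have "proper (Pstar A b T D) (\<Union>t\<in>T. R t) (mixed_int_hull A b I)"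
    using eq valid_disj by (auto simp: proper_def valid_ineqs_def)
  with facets rays_of_facets show ?thesis
    by blast
qed

end
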